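(* Let $X$ be a path-connected topological space admitting a universal cover, let $\mathfrak a\in H^1(X;\mathbb R)$ be represented by a singular one-cocycle $\alpha$, and let $G\subseteq\mathrm{Homeo}(X,\mathfrak a)$ be a subgroup on which the cocycles $\mathfrak G_{x,\alpha}$ and $\mathfrak G_{y,\alpha}$ are bounded, for some $x,y\in X$. Then the map $\mathfrak q\colon G\to\mathbb R$ defined by $$\mathfrak q(g):=\mathfrak K_\alpha(g)(y)-\mathfrak K_\alpha(g)(x)$$ is a quasimorphism on $G$, and $D(\mathfrak q)\le\|\mathfrak G_{x,\alpha}-\mathfrak G_{y,\alpha}\|\le\|\mathfrak G_{x,\alpha}\|+\|\mathfrak G_{y,\alpha}\|$, where $\|\cdot\|$ is the supremum norm on $G\times G$.
   Context: $\mathrm{Homeo}(X,\mathfrak a)$ is the group of homeomorphisms $g$ with $g^*\mathfrak a=\mathfrak a$. $\mathfrak G_{z,\alpha}(g,h)=\int_\gamma g^*\alpha-\alpha$ for $\gamma$ any path from $z$ to $hz$, where $\int_\gamma\sigma$ is the pairing of chain and cochain. For $g\in\mathrm{Homeo}(X,\mathfrak a)$, $\mathfrak K_\alpha(g)$ is a function $F\colon X\to\mathbb R$, defined up to additive constant, with $g^*\alpha-\alpha=\delta F$; so differences $\mathfrak K_\alpha(g)(y)-\mathfrak K_\alpha(g)(x)$ are well defined. The defect of $\mathfrak q\colon G\to\mathbb R$ is $D(\mathfrak q)=\sup_{g,h\in G}|\mathfrak q(g)-\mathfrak q(gh)+\mathfrak q(h)|$, and $\mathfrak q$ is a quasimorphism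 if $D(\mathfrak q)<\infty$. *)

theory Defs
  imports "HOL-Analysis.Analysis" "HOL-Homology.Homology" "HOL-Algebra.Bij"
begin

definition covering_map_top :: "'c topology \<Rightarrow> 'a topology \<Rightarrow> ('c \<Rightarrow> 'a) \<Rightarrow> bool" where
  "covering_map_top C X p \<equiv>
     continuous_map C X p \<and> p ` topspace C = topspace X \<and>
     (\<forall>x \<in> topspace X. \<exists>T. x \<in> T \<and> openin X T \<and>
        (\<exists>v. \<Union>v = topspace C \<inter> p -` T \<and> (\<forall>u \<in> v. openin C u) \<and> pairwise disjnt v \<and>
             (\<forall>u \<in> v. \<exists>q. homeomorphic_maps (subtopology C u) (subtopology X T) p q)))"

definition simply_connected_space :: "'c topology \<Rightarrow> bool" where
  "simply_connected_space C \<equiv> path_connected_space C \<and>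
     (\<forall>l. pathin C l \<and> l 1 = l 0 \<longrightarrow>
        homotopic_with (\<lambda>r. r 1 = r 0) (subtopology euclideanreal {0..1}) C l (\<lambda>_. l 0))"

definition has_universal_cover :: "'c itself \<Rightarrow> 'a topology \<Rightarrow> bool" where
  "has_universal_cover _ X \<equiv> \<exists>(C :: 'c topology) p. covering_map_top C X p \<and> simply_connected_space C"

type_synonym 'a cochain = "((nat \<Rightarrow> real) \<Rightarrow> 'a) \<Rightarrow> real"

definition pairing :: "'a cochain \<Rightarrow> 'a chain \<Rightarrow> real" where
  "pairing \<alpha> c = (\<Sum>\<sigma> \<in> Poly_Mapping.keys c. real_of_int (poly_mapping.lookup c \<sigma>) * \<alpha> \<sigma>)"

text \<open>A 0-cochain given by a function on points: evaluate a singular 0-simplex at the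
  unique point of the standard 0-simplex.\<close>
definition point_cochain :: "('a \<Rightarrow> real) \<Rightarrow> 'a cochain" where
  "point_cochain F = (\<lambda>\<tau>. F (\<tau> (\<lambda>i. if i = 0 then 1 else 0)))"

definition coboundary0 :: "('a \<Rightarrow> real) \<Rightarrow> 'a cochain" where
  "coboundary0 F = (\<lambda>\<sigma>. pairing (point_cochain F) (chain_boundary 1 (frag_of \<sigma>)))"

definition cocycle1 :: "'a topology \<Rightarrow> 'a cochain \<Rightarrow> bool" where
  "cocycle1 X \<alpha> \<longleftrightarrow> (\<forall>\<sigma>. singular_simplex 2 X \<sigma> \<longrightarrow> pairing \<alpha> (chain_boundary 2 (frag_of \<sigma>)) = 0)"

definition pullback1 :: "('a \<Rightarrow> 'a) \<Rightarrow> 'a cochain \<Rightarrow> 'a cochain" where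
  "pullback1 g \<alpha> = (\<lambda>\<sigma>. \<alpha> (simplex_map 1 g \<sigma>))"

definition is_K :: "'a topology \<Rightarrow> 'a cochain \<Rightarrow> ('a \<Rightarrow> 'a) \<Rightarrow> ('a \<Rightarrow> real) \<Rightarrow> bool" where
  "is_K X \<alpha> g F \<longleftrightarrow> (\<forall>\<sigma>. singular_simplex 1 X \<sigma> \<longrightarrow> pullback1 g \<alpha> \<sigma> - \<alpha> \<sigma> = coboundary0 F \<sigma>)"

text \<open>\<open>Homeo(X, [\<alpha>])\<close>: homeomorphisms of X preserving the cohomology class of \<alpha>.\<close>
definition Homeo_class :: "'a topology \<Rightarrow> 'a cochain \<Rightarrow> ('a \<Rightarrow> 'a) set" where
  "Homeo_class X \<alpha> = {g. homeomorphic_map X X g \<and> (\<exists>F. is_K X \<alpha> g F)}"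

text \<open>\<open>\<KK>\<^sub>\<alpha>(g)\<close>, a chosen primitive (defined up to an additive constant).\<close>
definition K_fun :: "'a topology \<Rightarrow> 'a cochain \<Rightarrow> ('a \<Rightarrow> 'a) \<Rightarrow> 'a \<Rightarrow> real" where
  "K_fun X \<alpha> g = (SOME F. is_K X \<alpha> g F)"

text \<open>Singular 1-simplex viewed as a path: it starts at the vertex e0 and ends at e1.\<close>
definition simplex_from_to :: "'a topology \<Rightarrow> 'a \<Rightarrow> 'a \<Rightarrow> ((nat \<Rightarrow> real) \<Rightarrow> 'a) \<Rightarrow> bool" where
  "simplex_from_to X a b \<sigma> \<longleftrightarrow> singular_simplex 1 X \<sigma> \<and>
     \<sigma> (\<lambda>i. if i = 0 then 1 else 0) = a \<and> \<sigma> (\<lambda>i. if i = 1 then 1 else 0) = b"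

text \<open>\<open>\<GG>\<^sub>z\<^sub>,\<^sub>\<alpha>(g,h) = \<integral>\<^sub>\<gamma> g\<^sup>*\<alpha> - \<alpha>\<close> for a (chosen) path \<gamma> from z to h z.\<close>
definition G_cocycle :: "'a topology \<Rightarrow> 'a \<Rightarrow> 'a cochain \<Rightarrow> ('a \<Rightarrow> 'a) \<Rightarrow> ('a \<Rightarrow> 'a) \<Rightarrow> real" where
  "G_cocycle X z \<alpha> g h =
     (let \<gamma> = (SOME \<gamma>. simplex_from_to X z (h z) \<gamma>)
      in pairing (\<lambda>\<sigma>. pullback1 g \<alpha> \<sigma> - \<alpha> \<sigma>) (frag_of \<gamma>))"

definition sup_norm :: "('g set) \<Rightarrow> ('g \<Rightarrow> 'g \<Rightarrow> real) \<Rightarrow> real" where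
  "sup_norm G f = (SUP p \<in> G \<times> G. \<bar>f (fst p) (snd p)\<bar>)"

definition bounded_on :: "('g set) \<Rightarrow> ('g \<Rightarrow> 'g \<Rightarrow> real) \<Rightarrow> bool" where
  "bounded_on G f \<longleftrightarrow> bdd_above ((\<lambda>p. \<bar>f (fst p) (snd p)\<bar>) ` (G \<times> G))"

definition defect :: "('g, 'b) monoid_scheme \<Rightarrow> ('g \<Rightarrow> real) \<Rightarrow> real" where
  "defect G q = (SUP p \<in> carrier G \<times> carrier G.
       \<bar>q (fst p) - q (fst p \<otimes>\<^bsub>G\<^esub> snd p) + q (snd p)\<bar>)"

definition quasimorphism :: "('g, 'b) monoid_scheme \<Rightarrow> ('g \<Rightarrow> real) \<Rightarrow> bool" where
  "quasimorphism G q \<longleftrightarrow> bdd_above ((\<lambda>p. \<bar>q (fst p) - q (fst p \<otimes>\<^bsub>G\<^esub> snd p) + q (snd p)\<bar>)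
                               ` (carrier G \<times> carrier G))"

end

theory Submission imports Defs begin

text \<open>Evaluating the defining identity \<open>g\<^sup>*\<alpha> - \<alpha> = \<delta>\<KK>\<^sub>\<alpha>(g)\<close> on a path from \<open>z\<close> to \<open>h z\<close>
  gives \<open>\<GG>\<^sub>z\<^sub>,\<^sub>\<alpha>(g,h) = \<KK>\<^sub>\<alpha>(g)(h z) - \<KK>\<^sub>\<alpha>(g)(z)\<close>, and pulling a path back along \<open>h\<close> gives
  \<open>\<KK>\<^sub>\<alpha>(gh)(b) - \<KK>\<^sub>\<alpha>(gh)(a) = \<KK>\<^sub>\<alpha>(g)(h b) - \<KK>\<^sub>\<alpha>(g)(h a) + \<KK>\<^sub>\<alpha>(h)(b) - \<KK>\<^sub>\<alpha>(h)(a)\<close>.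
  Together these yield the exact identity \<open>\<qq>(g) - \<qq>(gh) + \<qq>(h) = \<GG>\<^sub>x\<^sub>,\<^sub>\<alpha>(g,h) - \<GG>\<^sub>y\<^sub>,\<^sub>\<alpha>(g,h)\<close>,
  so the defect of \<open>\<qq>\<close> is the sup norm of \<open>\<GG>\<^sub>x\<^sub>,\<^sub>\<alpha> - \<GG>\<^sub>y\<^sub>,\<^sub>\<alpha>\<close>.\<close>

lemma pairing_frag_of: "pairing \<alpha> (frag_of a) = \<alpha> a"
  by (simp add: pairing_def)

lemma pairing_frag_of_diff: "pairing \<alpha> (frag_of a - frag_of b) = \<alpha> a - \<alpha> b"
proof -
  have "Poly_Mapping.keys (frag_of a - frag_of b) \<subseteq> {a, b}"
    by (auto simp: in_keys_iff lookup_minus lookup_single split: if_splits)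
  then have "pairing \<alpha> (frag_of a - frag_of b)
      = (\<Sum>\<sigma>\<in>{a, b}. real_of_int (poly_mapping.lookup (frag_of a - frag_of b) \<sigma>) * \<alpha> \<sigma>)"
    unfolding pairing_def
    by (intro sum.mono_neutral_left) (auto simp: in_keys_iff)
  also have "\<dots> = \<alpha> a - \<alpha> b"
    by (cases "a = b") (auto simp: lookup_minus lookup_single)
  finally show ?thesis .
qed

lemma coboundary0_eq_endpoints:
  "coboundary0 F \<sigma> = F (\<sigma> (\<lambda>i. if i = 1 then 1 else 0)) - F (\<sigma> (\<lambda>i. if i = 0 then 1 else 0))"
proof -
  have "chain_boundary 1 (frag_of \<sigma>) = frag_of (singular_face 1 0 \<sigma>) - frag_of (singular_face 1 1 \<sigma>)"
    by (simp add: chain_boundary_def frag_cmul_minus_one)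
  moreover have "simplical_face 0 (\<lambda>i::nat. if i = 0 then 1 else (0::real)) = (\<lambda>i. if i = 1 then 1 else 0)"
    and "simplical_face 1 (\<lambda>i::nat. if i = 0 then 1 else (0::real)) = (\<lambda>i. if i = 0 then 1 else 0)"
    by (auto simp: simplical_face_def)
  ultimately show ?thesis
    by (simp add: coboundary0_def pairing_frag_of_diff point_cochain_def singular_face_def)
qed

lemma simplex_from_to_exists:
  assumes "path_connected_space X" "a \<in> topspace X" "b \<in> topspace X"
  obtains \<sigma> where "simplex_from_to X a b \<sigma>"
proof -
  obtain \<gamma> where \<gamma>: "pathin X \<gamma>" "\<gamma> 0 = a" "\<gamma> 1 = b"
    using assms unfolding path_connected_space_def by blast
  define \<sigma> where "\<sigma> = restrict (\<lambda>v. \<gamma> (v 1)) (standard_simplex 1)"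
  have "continuous_map (subtopology (powertop_real UNIV) (standard_simplex 1))
          (subtopology euclideanreal {0..1}) (\<lambda>v. v 1)"
    by (auto simp: continuous_map_in_subtopology standard_simplex_def
        intro!: continuous_map_from_subtopology continuous_map_product_projection)
  from continuous_map_compose[OF this \<gamma>(1)[unfolded pathin_def]]
  have "continuous_map (subtopology (powertop_real UNIV) (standard_simplex 1)) X \<sigma>"
    unfolding \<sigma>_def by (rule continuous_map_eq) auto
  then have "singular_simplex 1 X \<sigma>"
    by (simp add: singular_simplex_def \<sigma>_def)
  with \<gamma> have "simplex_from_to X a b \<sigma>"
    by (auto simp: simplex_from_to_def \<sigma>_def)
  then show thesis ..
qed

lemma is_K_K_fun:
  assumes "g \<in> Homeo_class X \<alpha>"
  shows "is_K X \<alpha> g (K_fun X \<alpha> g)"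
  using assms someI_ex[of "is_K X \<alpha> g"] unfolding Homeo_class_def K_fun_def by blast

lemma is_K_simplex_from_to:
  assumes "simplex_from_to X a b \<sigma>" "is_K X \<alpha> g F"
  shows "pullback1 g \<alpha> \<sigma> - \<alpha> \<sigma> = F b - F a"
  using assms unfolding simplex_from_to_def is_K_def by (simp add: coboundary0_eq_endpoints)

lemma G_cocycle_eq_K_fun_diff:
  assumes "path_connected_space X" "z \<in> topspace X" "h z \<in> topspace X" "g \<in> Homeo_class X \<alpha>"
  shows "G_cocycle X z \<alpha> g h = K_fun X \<alpha> g (h z) - K_fun X \<alpha> g z"
proof -
  have "\<exists>\<gamma>. simplex_from_to X z (h z) \<gamma>"
    using simplex_from_to_exists[OF assms(1-3)] by blast
  then have "simplex_from_to X z (h z) (SOME \<gamma>. simplex_from_to X z (h z) \<gamma>)"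
    by (rule someI_ex)
  from is_K_simplex_from_to[OF this is_K_K_fun[OF assms(4)]] show ?thesis
    unfolding G_cocycle_def Let_def pairing_frag_of .
qed

lemma K_fun_diff_compose:
  assumes "path_connected_space X" "a \<in> topspace X" "b \<in> topspace X"
    and g: "g \<in> Homeo_class X \<alpha>" and h: "h \<in> Homeo_class X \<alpha>"
    and gh: "compose (topspace X) g h \<in> Homeo_class X \<alpha>"
  shows "K_fun X \<alpha> (compose (topspace X) g h) b - K_fun X \<alpha> (compose (topspace X) g h) a
    = (K_fun X \<alpha> g (h b) - K_fun X \<alpha> g (h a)) + (K_fun X \<alpha> h b - K_fun X \<alpha> h a)"
proof -
  obtain \<sigma> where \<sigma>: "simplex_from_to X a b \<sigma>"
    using simplex_from_to_exists[OF assms(1-3)] .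
  have \<sigma>_simplex: "singular_simplex 1 X \<sigma>"
    using \<sigma> by (simp add: simplex_from_to_def)
  have "continuous_map X X h"
    using h by (auto simp: Homeo_class_def homeomorphic_imp_continuous_map)
  then have h\<sigma>: "simplex_from_to X (h a) (h b) (simplex_map 1 h \<sigma>)"
    using \<sigma> singular_simplex_simplex_map[OF \<sigma>_simplex]
    by (simp add: simplex_from_to_def simplex_map_def)
  have "simplex_map 1 (compose (topspace X) g h) \<sigma> = simplex_map 1 (g \<circ> h) \<sigma>"
    using \<sigma>_simplex by (rule simplex_map_eq) (simp add: compose_def)
  then have "pullback1 (compose (topspace X) g h) \<alpha> \<sigma> - \<alpha> \<sigma>
      = (pullback1 g \<alpha> (simplex_map 1 h \<sigma>) - \<alpha> (simplex_map 1 h \<sigma>)) + (pullback1 h \<alpha> \<sigma> - \<alpha> \<sigma>)"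
    by (simp add: pullback1_def simplex_map_compose)
  then show ?thesis
    using is_K_simplex_from_to[OF \<sigma> is_K_K_fun[OF gh]] is_K_simplex_from_to[OF h\<sigma> is_K_K_fun[OF g]]
      is_K_simplex_from_to[OF \<sigma> is_K_K_fun[OF h]]
    by simp
qed

lemma sup_norm_upper:
  assumes "bounded_on G f" "g \<in> G" "h \<in> G"
  shows "\<bar>f g h\<bar> \<le> sup_norm G f"
  using assms cSUP_upper[of "(g, h)" "G \<times> G" "\<lambda>p. \<bar>f (fst p) (snd p)\<bar>"]
  by (simp add: bounded_on_def sup_norm_def)

lemma bounded_on_diff:
  assumes "bounded_on G f" "bounded_on G f'"
  shows "bounded_on G (\<lambda>g h. f g h - f' g h)"
  unfolding bounded_on_def bdd_above_def
proof (intro exI ballI)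
  fix r assume "r \<in> (\<lambda>p. \<bar>f (fst p) (snd p) - f' (fst p) (snd p)\<bar>) ` (G \<times> G)"
  then obtain g h where gh: "g \<in> G" "h \<in> G" and r: "r = \<bar>f g h - f' g h\<bar>" by auto
  have "\<bar>f g h\<bar> \<le> sup_norm G f" "\<bar>f' g h\<bar> \<le> sup_norm G f'"
    using sup_norm_upper[OF assms(1) gh] sup_norm_upper[OF assms(2) gh] .
  then show "r \<le> sup_norm G f + sup_norm G f'"
    unfolding r by linarith
qed

lemma sup_norm_diff_le:
  assumes "G \<noteq> {}" "bounded_on G f" "bounded_on G f'"
  shows "sup_norm G (\<lambda>g h. f g h - f' g h) \<le> sup_norm G f + sup_norm G f'"
  unfolding sup_norm_def[of G "\<lambda>g h. f g h - f' g h"]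
proof (rule cSUP_least)
  show "G \<times> G \<noteq> {}" using assms(1) by simp
next
  fix p assume "p \<in> G \<times> G"
  then have p: "fst p \<in> G" "snd p \<in> G" by auto
  have "\<bar>f (fst p) (snd p)\<bar> \<le> sup_norm G f" "\<bar>f' (fst p) (snd p)\<bar> \<le> sup_norm G f'"
    using sup_norm_upper[OF assms(2) p] sup_norm_upper[OF assms(3) p] .
  then show "\<bar>f (fst p) (snd p) - f' (fst p) (snd p)\<bar> \<le> sup_norm G f + sup_norm G f'"
    by linarith
qed

lemma
  assumes "\<And>g h. g \<in> carrier G \<Longrightarrow> h \<in> carrier G \<Longrightarrow> q g - q (g \<otimes>\<^bsub>G\<^esub> h) + q h = c g h"
  shows quasimorphism_iff_bounded_on: "quasimorphism G q \<longleftrightarrow> bounded_on (carrier G) c"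
    and defect_eq_sup_norm: "defect G q = sup_norm (carrier G) c"
proof -
  have "(\<lambda>p. \<bar>q (fst p) - q (fst p \<otimes>\<^bsub>G\<^esub> snd p) + q (snd p)\<bar>) ` (carrier G \<times> carrier G)
      = (\<lambda>p. \<bar>c (fst p) (snd p)\<bar>) ` (carrier G \<times> carrier G)"
    using assms by (intro image_cong) auto
  then show "quasimorphism G q \<longleftrightarrow> bounded_on (carrier G) c" "defect G q = sup_norm (carrier G) c"
    by (simp_all add: quasimorphism_def bounded_on_def defect_def sup_norm_def)
qed

lemma K_fun_defect_identity:
  assumes "path_connected_space X" "subgroup H (BijGroup (topspace X))" "H \<subseteq> Homeo_class X \<alpha>"
    and "x \<in> topspace X" "y \<in> topspace X" "g \<in> H" "h \<in> H"
  defines "q \<equiv> \<lambda>g. K_fun X \<alpha> g y - K_fun X \<alpha> g x"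
  shows "q g - q (g \<otimes>\<^bsub>BijGroup (topspace X)\<^esub> h) + q h = G_cocycle X x \<alpha> g h - G_cocycle X y \<alpha> g h"
proof -
  have Bij: "g \<in> Bij (topspace X)" "h \<in> Bij (topspace X)"
    using subgroup.subset[OF assms(2)] assms(6,7) by (auto simp: BijGroup_def)
  then have mult: "g \<otimes>\<^bsub>BijGroup (topspace X)\<^esub> h = compose (topspace X) g h"
    by (simp add: BijGroup_def)
  have "compose (topspace X) g h \<in> H"
    using subgroup.m_closed[OF assms(2,6,7)] mult by simp
  then have "compose (topspace X) g h \<in> Homeo_class X \<alpha>"
    using assms(3) by blast
  moreover have "g \<in> Homeo_class X \<alpha>" "h \<in> Homeo_class X \<alpha>"
    using assms(3,6,7) by auto
  moreover have "h x \<in> topspace X" "h y \<in> topspace X"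
    using Bij_imp_funcset[OF Bij(2)] assms(4,5) by auto
  ultimately show ?thesis
    using K_fun_diff_compose[OF assms(1,4,5)]
      G_cocycle_eq_K_fun_diff[OF assms(1,4)] G_cocycle_eq_K_fun_diff[OF assms(1,5)]
    by (simp add: q_def mult)
qed

theorem proposition3p1:
  fixes X :: "'a topology" and \<alpha> :: "'a cochain" and H :: "('a \<Rightarrow> 'a) set"
    and x y :: 'a
  assumes "path_connected_space X"
    and "has_universal_cover TYPE('c) X"
    and "cocycle1 X \<alpha>"
    and "subgroup H (BijGroup (topspace X))"
    and "H \<subseteq> Homeo_class X \<alpha>"
    and "x \<in> topspace X" and "y \<in> topspace X"
    and "bounded_on H (G_cocycle X x \<alpha>)"
    and "bounded_on H (G_cocycle X y \<alpha>)"
  shows "quasimorphism ((BijGroup (topspace X))\<lparr>carrier := H\<rparr>) (\<lambda>g. K_fun X \<alpha> g y - K_fun X \<alpha> g x)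
       \<and> defect ((BijGroup (topspace X))\<lparr>carrier := H\<rparr>) (\<lambda>g. K_fun X \<alpha> g y - K_fun X \<alpha> g x)
           \<le> sup_norm H (\<lambda>g h. G_cocycle X x \<alpha> g h - G_cocycle X y \<alpha> g h)
       \<and> sup_norm H (\<lambda>g h. G_cocycle X x \<alpha> g h - G_cocycle X y \<alpha> g h)
           \<le> sup_norm H (G_cocycle X x \<alpha>) + sup_norm H (G_cocycle X y \<alpha>)"
proof -
  let ?G = "(BijGroup (topspace X))\<lparr>carrier := H\<rparr>"
  let ?q = "\<lambda>g. K_fun X \<alpha> g y - K_fun X \<alpha> g x"
  let ?c = "\<lambda>g h. G_cocycle X x \<alpha> g h - G_cocycle X y \<alpha> g h"
  have identity: "?q g - ?q (g \<otimes>\<^bsub>?G\<^esub> h) + ?q h = ?c g h" if "g \<in> carrier ?G" "h \<in> carrier ?G" for g h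
    using K_fun_defect_identity[OF assms(1,4,5,6,7)] that by simp
  have "H \<noteq> {}"
    using subgroup.one_closed[OF assms(4)] by blast
  show ?thesis
  proof (intro conjI)
    show "quasimorphism ?G ?q"
      using quasimorphism_iff_bounded_on[where q = ?q and c = ?c, OF identity]
        bounded_on_diff[OF assms(8,9)] by simp
    show "defect ?G ?q \<le> sup_norm H ?c"
      using defect_eq_sup_norm[where q = ?q and c = ?c, OF identity] by simp
    show "sup_norm H ?c \<le> sup_norm H (G_cocycle X x \<alpha>) + sup_norm H (G_cocycle X y \<alpha>)"
      using sup_norm_diff_le[OF \<open>H \<noteq> {}\<close> assms(8,9)] .
  qed
qed

end
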